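(* Let $c \geq 1$ and let $g : (0,1] \rightarrow \mathbb{R}^+$ be non-increasing such that $$\frac{1}{t}\int_0^t g(u)\,du \leq c\, g(t) \quad \text{for every } t \in (0,1].$$ Then for every $\delta \in (0,1]$ and every $p$ with $1 \leq p < \frac{c}{c-1}$ (interpreted as $p\ge 1$ arbitrary when $c=1$), $$\frac{1}{\delta}\int_0^\delta g^p \leq \frac{1}{c^{p-1}(c+p-pc)}\left(\frac{1}{\delta}\int_0^\delta g\right)^p.$$ Moreover the inequality is sharp: for each such $c$ and $p$, the constant $\frac{1}{c^{p-1}(c+p-pc)}$ cannot be replaced by any smaller number. *)

theory Defs
  imports "HOL-Analysis.Analysis"
begin

definition admissible :: "real \<Rightarrow> (real \<Rightarrow> real) \<Rightarrow> bool" where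
  "admissible c g \<longleftrightarrow>
     (\<forall>t\<in>{0<..1}. g t > 0) \<and>
     (\<forall>s\<in>{0<..1}. \<forall>t\<in>{0<..1}. s \<le> t \<longrightarrow> g t \<le> g s) \<and>
     (\<forall>t\<in>{0<..1}. set_integrable lborel {0<..t} g \<and>
        (1 / t) * (LBINT u:{0<..t}. g u) \<le> c * g t)"

definition power_avg_ineq :: "real \<Rightarrow> real \<Rightarrow> (real \<Rightarrow> real) \<Rightarrow> real \<Rightarrow> bool" where
  "power_avg_ineq K p g \<delta> \<longleftrightarrow>
     set_integrable lborel {0<..\<delta>} (\<lambda>u. g u powr p) \<and>
     (1 / \<delta>) * (LBINT u:{0<..\<delta>}. g u powr p)
        \<le> K * ((1 / \<delta>) * (LBINT u:{0<..\<delta>}. g u)) powr p"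

end

theory Submission
  imports Defs
begin

text \<open>
  Write a = g(\<delta>). By Fubini, the integral over (0,\<delta>] of g^p - a^(p-1) g equals the integral over
  s \<ge> a of (p-1) s^(p-2) times the integral of g over the superlevel set {g \<ge> s}. As g is
  nonincreasing, that set is an initial interval of length \<tau> up to one endpoint, and g < s just
  to the right of \<tau>, so the averaging hypothesis there bounds the inner integral by c s \<tau>;
  integrating back yields
  \<integral> (g^p - a^(p-1) g) \<le> c (p-1)/p \<integral> (g^p - a^p).
  When c (p-1) < p this can be solved for \<integral> g^p, and Young's inequality eliminates a.
  Finiteness of \<integral> g^p is not known in advance, so the argument is run for the truncations
  min g M and passed to the limit by monotone convergence. The function t^(1/c - 1) satisfies
  the hypothesis with equality and attains the constant.
\<close>

lemma set_integral_powr_Ioc_0: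
  fixes t b :: real
  assumes t: "t > 0" and b: "b > -1"
  shows "set_integrable lborel {0<..t} (\<lambda>u. u powr b)"
    and "(LBINT u:{0<..t}. u powr b) = t powr (b + 1) / (b + 1)"
proof -
  define v where "v = t powr (b + 1) / (b + 1)"
  have v0: "v \<ge> 0" unfolding v_def using b by simp
  have "((\<lambda>x. x powr b) has_integral v) {0..t}" unfolding v_def
    using has_integral_powr_from_0[OF b] t by simp
  then have "((\<lambda>x. x powr b) has_integral v) {0<..t}"
    by (subst has_integral_spike_set_eq[of "{0<..t}" "{0..t}"])
      (auto intro: negligible_subset[OF negligible_sing[of 0]])
  moreover have "(\<lambda>x. indicator {0<..t} x * x powr b)
      = (\<lambda>x. if x \<in> {0<..t} then x powr b else 0)"
    by (auto simp: indicator_def)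
  ultimately have "((\<lambda>x. indicator {0<..t} x * x powr b) has_integral v) UNIV"
    by (simp only: has_integral_restrict_UNIV)
  then have "(\<integral>\<^sup>+x. ennreal (indicator {0<..t} x * x powr b) \<partial>lborel) = ennreal v"
    by (intro nn_integral_has_integral_lborel) auto
  then have "integrable lborel (\<lambda>x. indicator {0<..t} x * x powr b)
      \<and> (\<integral>x. indicator {0<..t} x * x powr b \<partial>lborel) = v"
    using v0 by (subst nn_integral_eq_integrable[symmetric]) auto
  then show "set_integrable lborel {0<..t} (\<lambda>u. u powr b)"
    and "(LBINT u:{0<..t}. u powr b) = t powr (b + 1) / (b + 1)"
    unfolding set_integrable_def set_lebesgue_integral_def v_def by simp_all
qed

lemma nn_integral_powr_deriv_Icc:
  fixes a b k e :: real
  assumes "0 < a" "a \<le> b" "0 \<le> k" "0 < e"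
  shows "(\<integral>\<^sup>+s. ennreal (indicator {a..b} s * (k * e * s powr (e - 1))) \<partial>lborel)
    = ennreal (k * b powr e - k * a powr e)"
proof -
  have "(\<integral>\<^sup>+s. ennreal (k * e * s powr (e - 1)) * indicator {a..b} s \<partial>lborel)
      = ennreal (k * b powr e - k * a powr e)"
  proof (rule nn_integral_FTC_Icc)
    fix x assume "x \<in> {a..b}"
    then have "x > 0" using assms by auto
    show "((\<lambda>s. k * s powr e) has_real_derivative (k * e * x powr (e - 1))) (at x)"
      by (rule DERIV_cong[OF DERIV_cmult[OF has_real_derivative_powr[OF \<open>x > 0\<close>]]])
        (simp add: mult.assoc)
    show "0 \<le> k * e * x powr (e - 1)" using assms by simp
  qed (use assms in auto)
  then show ?thesis by (simp add: indicator_mult_ennreal mult.commute)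
qed

lemma nn_integral_layer_weight_const:
  fixes a x p :: real
  assumes a: "0 < a" "a \<le> x" and p: "1 < p"
  shows "(\<integral>\<^sup>+s. ennreal (indicator {a..x} s * ((p - 1) * s powr (p - 2) * x)) \<partial>lborel)
    = ennreal (x powr p - a powr (p - 1) * x)"
proof -
  have "(\<integral>\<^sup>+s. ennreal (indicator {a..x} s * ((p - 1) * s powr (p - 2) * x)) \<partial>lborel)
      = (\<integral>\<^sup>+s. ennreal (indicator {a..x} s * (x * (p - 1) * s powr ((p - 1) - 1))) \<partial>lborel)"
    by (intro nn_integral_cong) (simp add: algebra_simps)
  also have "\<dots> = ennreal (x * x powr (p - 1) - x * a powr (p - 1))"
    using a p by (intro nn_integral_powr_deriv_Icc) auto
  also have "x * x powr (p - 1) = x powr p"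
    using a by (subst powr_mult_base) auto
  finally show ?thesis by (simp add: mult.commute)
qed

lemma nn_integral_layer_weight_linear:
  fixes a x p c :: real
  assumes a: "0 < a" "a \<le> x" and p: "1 < p" and c: "0 \<le> c"
  shows "(\<integral>\<^sup>+s. ennreal (indicator {a..x} s * ((p - 1) * s powr (p - 2) * (c * s))) \<partial>lborel)
    = ennreal (c * (p - 1) / p * (x powr p - a powr p))"
proof -
  have "(p - 1) * s powr (p - 2) * (c * s) = c * (p - 1) / p * p * s powr (p - 1)" if "0 < s" for s
  proof -
    have "(p - 1) * s powr (p - 2) * (c * s) = c * (p - 1) * (s * s powr (p - 2))"
      by (simp add: algebra_simps)
    also have "s * s powr (p - 2) = s powr (p - 1)" using that powr_mult_base[of s "p - 2"] by simp
    finally show ?thesis using p by simp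
  qed
  then have "(\<integral>\<^sup>+s. ennreal (indicator {a..x} s * ((p - 1) * s powr (p - 2) * (c * s))) \<partial>lborel)
      = (\<integral>\<^sup>+s. ennreal (indicator {a..x} s * (c * (p - 1) / p * p * s powr (p - 1))) \<partial>lborel)"
    using a by (intro nn_integral_cong) (simp add: indicator_def del: times_divide_eq_left)
  also have "\<dots> = ennreal (c * (p - 1) / p * x powr p - c * (p - 1) / p * a powr p)"
    using a p c by (intro nn_integral_powr_deriv_Icc) auto
  finally show ?thesis by (simp only: right_diff_distrib)
qed

lemma young_powr_weighted:
  fixes x A c p :: real
  assumes x: "x > 0" and A: "A \<ge> 0" and c: "c > 0" and p: "p > 1"
  shows "x powr (p - 1) * A \<le> c * (p - 1) / p * x powr p + A powr p * c powr (1 - p) / p"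
proof -
  have q: "p / (p - 1) > 1" using p by (simp add: field_simps)
  have "(c * x) powr (p - 1) * A
      \<le> ((c * x) powr (p - 1)) powr (p / (p - 1)) / (p / (p - 1)) + A powr p / p"
    by (rule Youngs_inequality[OF q p]) (use p A in \<open>auto simp: field_simps\<close>)
  also have "((c * x) powr (p - 1)) powr (p / (p - 1)) = (c * x) powr p"
    using p by (simp add: powr_powr)
  finally have young: "c powr (p - 1) * (x powr (p - 1) * A)
      \<le> c powr p * x powr p * ((p - 1) / p) + A powr p / p"
    using c x by (simp add: powr_mult mult_ac)
  have "c powr p = c powr (p - 1) * c"
    using c powr_mult_base[of c "p - 1"] by (simp add: mult.commute)
  moreover have "c powr (1 - p) * c powr (p - 1) = 1"
    using c by (simp add: powr_add[symmetric])
  ultimately have "c powr (p - 1) * (c * (p - 1) / p * x powr p + A powr p * c powr (1 - p) / p)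
      = c powr p * x powr p * ((p - 1) / p) + A powr p / p"
    by (simp add: algebra_simps)
  with young have "c powr (p - 1) * (x powr (p - 1) * A)
      \<le> c powr (p - 1) * (c * (p - 1) / p * x powr p + A powr p * c powr (1 - p) / p)"
    by simp
  then show ?thesis using c by simp
qed

lemma integral_le_of_nn_integral_le:
  fixes h :: "'a \<Rightarrow> real"
  assumes [measurable]: "h \<in> borel_measurable M"
    and nonneg: "\<And>x. 0 \<le> h x" and B: "0 \<le> B"
    and le: "(\<integral>\<^sup>+x. ennreal (h x) \<partial>M) \<le> ennreal B"
  shows "integrable M h" and "integral\<^sup>L M h \<le> B"
proof -
  show int: "integrable M h"
    using nonneg le_less_trans[OF le ennreal_less_top] by (intro integrableI_bounded) simp_all
  have "ennreal (integral\<^sup>L M h) \<le> ennreal B"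
    using le nn_integral_eq_integral[OF int] nonneg by simp
  then show "integral\<^sup>L M h \<le> B" using B by (simp add: ennreal_le_iff)
qed

lemma nn_integral_powr_le_of_truncations:
  fixes h :: "'a \<Rightarrow> real"
  assumes [measurable]: "h \<in> borel_measurable M" "S \<in> sets M"
    and nonneg: "\<And>x. x \<in> S \<Longrightarrow> 0 \<le> h x" and p: "0 \<le> p" and T: "0 \<le> T"
    and trunc: "\<And>L. T \<le> L \<Longrightarrow>
      (\<integral>\<^sup>+x. ennreal (indicator S x * min (h x) L powr p) \<partial>M) \<le> B"
  shows "(\<integral>\<^sup>+x. ennreal (indicator S x * h x powr p) \<partial>M) \<le> B"
proof -
  define F where "F n x = ennreal (indicator S x * min (h x) (T + real n) powr p)" for n x
  have "incseq F"
    unfolding F_def using nonneg p T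
    by (intro incseq_SucI le_funI ennreal_leI)
      (auto simp: indicator_def intro!: powr_mono2)
  moreover have "(SUP n. F n x) = ennreal (indicator S x * h x powr p)" for x
  proof (cases "x \<in> S")
    case True
    obtain N :: nat where N: "h x \<le> real N" using real_arch_simple by blast
    show ?thesis
    proof (rule antisym)
      show "(SUP n. F n x) \<le> ennreal (indicator S x * h x powr p)"
        unfolding F_def using True nonneg p T
        by (intro SUP_least ennreal_leI) (auto intro!: powr_mono2)
      have "F N x = ennreal (indicator S x * h x powr p)"
        unfolding F_def using N T by simp
      then show "ennreal (indicator S x * h x powr p) \<le> (SUP n. F n x)"
        by (metis SUP_upper UNIV_I)
    qed
  qed (simp add: F_def)
  moreover have "F n \<in> borel_measurable M" for n unfolding F_def by measurable
  ultimately have "(\<integral>\<^sup>+x. ennreal (indicator S x * h x powr p) \<partial>M) = (SUP n. integral\<^sup>N M (F n))"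
    using nn_integral_monotone_convergence_SUP[of F M] by simp
  also have "\<dots> \<le> B"
    unfolding F_def using T by (intro SUP_least trunc) simp
  finally show ?thesis .
qed

lemma power_bound_of_level_estimate:
  fixes X F a \<delta> c p :: real
  assumes \<delta>: "\<delta> > 0" and c: "c > 0" and a: "a > 0" and p: "p > 1" "c * (p - 1) < p"
    and F: "F \<ge> 0"
    and level: "X - a powr (p - 1) * F \<le> c * (p - 1) / p * (X - a powr p * \<delta>)"
  shows "X \<le> \<delta> / (c powr (p - 1) * (c + p - p * c)) * (F / \<delta>) powr p"
proof -
  define A where "A = F / \<delta>"
  have FA: "F = \<delta> * A" unfolding A_def using \<delta> by simp
  define k where "k = c * (p - 1) / p"
  have "(1 - k) * X \<le> a powr (p - 1) * F - k * a powr p * \<delta>"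
    using level[folded k_def] by (simp add: algebra_simps)
  also have "\<dots> = \<delta> * (a powr (p - 1) * A - k * a powr p)"
    unfolding FA by (simp add: algebra_simps)
  also have "\<dots> \<le> \<delta> * (A powr p * c powr (1 - p) / p)"
    using young_powr_weighted[OF a _ c p(1), of A] \<delta> F unfolding A_def k_def
    by (intro mult_left_mono) auto
  finally have Z: "(1 - k) * X \<le> \<delta> * (A powr p * c powr (1 - p) / p)" .
  have D: "1 - k = (c + p - p * c) / p" unfolding k_def using p by (simp add: field_simps)
  have Dpos: "c + p - p * c > 0" using p by (simp add: algebra_simps)
  have "X \<le> \<delta> * (A powr p * c powr (1 - p) / p) / ((c + p - p * c) / p)"
    using Z D Dpos p by (simp add: le_divide_eq mult.commute)
  also have "\<dots> = \<delta> / (c powr (p - 1) * (c + p - p * c)) * A powr p"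
    using p Dpos c by (simp add: powr_minus_divide[of c "p - 1", simplified] field_simps)
  finally show ?thesis unfolding A_def .
qed

text \<open>
  The hypotheses on g in the form used for its truncations: integrals of the nonnegative
  function f are taken in \<open>ennreal\<close>, so no integrability has to be carried along.
\<close>

locale decreasing_avg_bounded =
  fixes f :: "real \<Rightarrow> real" and \<delta> c :: real
  assumes f_measurable [measurable]: "f \<in> borel_measurable borel"
    and delta_pos: "0 < \<delta>" and c_pos: "0 < c" and f_delta_pos: "0 < f \<delta>"
    and f_antimono: "\<And>s t. 0 < s \<Longrightarrow> s \<le> t \<Longrightarrow> t \<le> \<delta> \<Longrightarrow> f t \<le> f s"
    and avg_bound: "\<And>t. t \<in> {0<..\<delta>} \<Longrightarrow>
      (\<integral>\<^sup>+x. ennreal (indicator {0<..t} x * f x) \<partial>lborel) \<le> ennreal (c * t * f t)"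
begin

lemma f_delta_le: "t \<in> {0<..\<delta>} \<Longrightarrow> f \<delta> \<le> f t"
  using f_antimono[of t \<delta>] by auto

lemma nn_integral_Ioc_Inf_le:
  assumes T: "T \<noteq> {}" "T \<subseteq> {0<..\<delta>}" and below: "\<And>t. t \<in> T \<Longrightarrow> f t \<le> s"
  shows "(\<integral>\<^sup>+x. ennreal (indicator {0<..Inf T} x * f x) \<partial>lborel) \<le> ennreal (c * s * Inf T)"
proof -
  define J where "J = (\<integral>\<^sup>+x. ennreal (indicator {0<..Inf T} x * f x) \<partial>lborel)"
  obtain t0 where t0: "t0 \<in> T" using T by auto
  have s_pos: "0 < s" using below[OF t0] f_delta_le[of t0] f_delta_pos t0 T by auto
  have Inf_le: "Inf T \<le> t" if "t \<in> T" for t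
    using T that by (intro cInf_lower bdd_belowI[of _ 0]) auto
  have J_le: "J \<le> ennreal (c * s * t)" if t: "t \<in> T" for t
  proof -
    have "J \<le> (\<integral>\<^sup>+x. ennreal (indicator {0<..t} x * f x) \<partial>lborel)"
      unfolding J_def using Inf_le[OF t] by (intro nn_integral_mono) (auto simp: indicator_def)
    also have "\<dots> \<le> ennreal (c * t * f t)" using t T by (intro avg_bound) auto
    also have "\<dots> \<le> ennreal (c * s * t)"
      using t T below[OF t] c_pos by (intro ennreal_leI) (auto simp: mult_ac)
    finally show ?thesis .
  qed
  then have "J \<noteq> \<infinity>" using t0 by (auto simp: top_unique)
  then obtain r where Jr: "J = ennreal r" and r: "0 \<le> r" by (cases J rule: ennreal_cases) auto
  have "r / (c * s) \<le> t" if t: "t \<in> T" for t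
  proof -
    have "0 \<le> c * s * t" using c_pos s_pos t T by auto
    then have "r \<le> c * s * t" using J_le[OF t] Jr by (simp add: ennreal_le_iff)
    then show ?thesis using c_pos s_pos by (simp add: divide_le_eq mult_ac)
  qed
  then have "r / (c * s) \<le> Inf T" by (intro cInf_greatest[OF T(1)])
  then have "r \<le> c * s * Inf T" using c_pos s_pos by (simp add: divide_le_eq mult_ac)
  then show ?thesis unfolding J_def[symmetric] Jr by (rule ennreal_leI)
qed

lemma superlevel_integral_le:
  assumes s: "f \<delta> \<le> s"
  defines "S \<equiv> {t \<in> {0<..\<delta>}. s \<le> f t}"
  shows "(\<integral>\<^sup>+t. ennreal (indicator S t * f t) \<partial>lborel) \<le> ennreal (c * s) * emeasure lborel S"
proof -
  define T where "T = {t \<in> {0<..\<delta>}. f t < s}"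
  have S_meas: "S \<in> sets lborel" unfolding S_def by measurable
  have s_pos: "0 < s" using s f_delta_pos by simp
  show ?thesis
  proof (cases "T = {}")
    case True
    then have SI: "S = {0<..\<delta>}" unfolding S_def T_def by force
    have "(\<integral>\<^sup>+t. ennreal (indicator S t * f t) \<partial>lborel) \<le> ennreal (c * \<delta> * f \<delta>)"
      using avg_bound[of \<delta>] delta_pos SI by simp
    also have "\<dots> \<le> ennreal (c * s * \<delta>)"
      using s c_pos delta_pos by (intro ennreal_leI) (simp add: mult_left_mono mult_right_mono)
    also have "\<dots> = ennreal (c * s) * emeasure lborel S"
      using SI c_pos delta_pos s_pos by (simp add: ennreal_mult)
    finally show ?thesis .
  next
    case False
    text \<open>Since f is nonincreasing, S lies between (0,\<tau>) and (0,\<tau>] for \<tau> = Inf T.\<close>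
    define \<tau> where "\<tau> = Inf T"
    have tau_le: "\<tau> \<le> t" if "t \<in> T" for t
      unfolding \<tau>_def using that by (intro cInf_lower bdd_belowI[of _ 0]) (auto simp: T_def)
    have tau_nonneg: "0 \<le> \<tau>" unfolding \<tau>_def using False by (intro cInf_greatest) (auto simp: T_def)
    have S_sub: "S \<subseteq> {0<..\<tau>}"
    proof
      fix t assume t: "t \<in> S"
      have "t \<le> t'" if t': "t' \<in> T" for t'
      proof (rule ccontr)
        assume "\<not> t \<le> t'"
        then have "f t \<le> f t'" using t t' by (intro f_antimono) (auto simp: S_def T_def)
        then show False using t t' by (auto simp: S_def T_def)
      qed
      then have "t \<le> \<tau>" unfolding \<tau>_def by (intro cInf_greatest[OF False])
      then show "t \<in> {0<..\<tau>}" using t by (auto simp: S_def)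
    qed
    have sub_S: "{0<..<\<tau>} \<subseteq> S"
    proof
      fix t assume t: "t \<in> {0<..<\<tau>}"
      obtain t0 where "t0 \<in> T" using False by auto
      then have "t \<le> \<delta>" using t tau_le[of t0] by (auto simp: T_def)
      moreover have "t \<notin> T" using t tau_le by force
      ultimately show "t \<in> S" using t by (auto simp: S_def T_def)
    qed
    have "(\<integral>\<^sup>+t. ennreal (indicator S t * f t) \<partial>lborel)
        \<le> (\<integral>\<^sup>+x. ennreal (indicator {0<..\<tau>} x * f x) \<partial>lborel)"
      using S_sub by (intro nn_integral_mono) (auto simp: indicator_def)
    also have "\<dots> \<le> ennreal (c * s * \<tau>)"
      unfolding \<tau>_def using False by (intro nn_integral_Ioc_Inf_le) (auto simp: T_def)
    also have "\<dots> = ennreal (c * s) * emeasure lborel {0<..<\<tau>}"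
      using tau_nonneg c_pos s_pos by (simp add: ennreal_mult)
    also have "\<dots> \<le> ennreal (c * s) * emeasure lborel S"
      by (intro mult_left_mono emeasure_mono sub_S S_meas) auto
    finally show ?thesis .
  qed
qed

lemma superlevel_weighted_le:
  assumes w: "0 \<le> w"
  shows "(\<integral>\<^sup>+t. ennreal (indicator {0<..\<delta>} t * indicator {f \<delta>..f t} s * (w * f t)) \<partial>lborel)
    \<le> (\<integral>\<^sup>+t. ennreal (indicator {0<..\<delta>} t * indicator {f \<delta>..f t} s * (w * (c * s))) \<partial>lborel)"
proof (cases "f \<delta> \<le> s")
  case False
  then show ?thesis by simp
next
  case True
  define S where "S = {t \<in> {0<..\<delta>}. s \<le> f t}"
  have S_meas: "S \<in> sets lborel" unfolding S_def by measurable
  have s_pos: "0 < s" using True f_delta_pos by simp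
  have "(\<integral>\<^sup>+t. ennreal (indicator {0<..\<delta>} t * indicator {f \<delta>..f t} s * (w * f t)) \<partial>lborel)
      = (\<integral>\<^sup>+t. ennreal w * ennreal (indicator S t * f t) \<partial>lborel)"
    using True w by (intro nn_integral_cong)
      (auto simp: S_def indicator_def ennreal_mult'[symmetric] mult.commute)
  also have "\<dots> = ennreal w * (\<integral>\<^sup>+t. ennreal (indicator S t * f t) \<partial>lborel)"
    by (rule nn_integral_cmult) (simp add: S_def)
  also have "\<dots> \<le> ennreal w * (ennreal (c * s) * emeasure lborel S)"
    using True unfolding S_def by (intro mult_left_mono superlevel_integral_le) auto
  also have "\<dots> = (\<integral>\<^sup>+t. ennreal (w * (c * s)) * indicator S t \<partial>lborel)"
    using w c_pos s_pos
    by (simp only: nn_integral_cmult_indicator[OF S_meas]) (simp add: ennreal_mult mult.assoc)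
  also have "\<dots> = (\<integral>\<^sup>+t. ennreal (indicator {0<..\<delta>} t * indicator {f \<delta>..f t} s * (w * (c * s))) \<partial>lborel)"
    using True by (intro nn_integral_cong) (auto simp: S_def indicator_def)
  finally show ?thesis .
qed

lemma layer_cake_bound:
  assumes p: "1 < p"
  shows "(\<integral>\<^sup>+t. ennreal (indicator {0<..\<delta>} t * (f t powr p - f \<delta> powr (p - 1) * f t)) \<partial>lborel)
    \<le> ennreal (c * (p - 1) / p)
       * (\<integral>\<^sup>+t. ennreal (indicator {0<..\<delta>} t * (f t powr p - f \<delta> powr p)) \<partial>lborel)"
proof -
  define a where "a = f \<delta>"
  define I where "I = {0<..\<delta>}"
  define q where "q s = (p - 1) * s powr (p - 2)" for s :: real
  text \<open>Both sides are integrals of q(s) times f(t) resp. c s over the region a \<le> s \<le> f(t);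
    integrating in t first and applying the superlevel set estimate compares them.\<close>
  define W where "W t s = ennreal (indicator I t * indicator {a..f t} s * (q s * f t))" for t s
  define W' where "W' t s = ennreal (indicator I t * indicator {a..f t} s * (q s * (c * s)))" for t s
  have a_pos: "0 < a" unfolding a_def by (rule f_delta_pos)
  have fa: "a \<le> f t" if "t \<in> I" for t using f_delta_le that unfolding a_def I_def by simp
  have region: "(\<lambda>(t, s). indicator {a..f t} s :: real)
      = (\<lambda>(t, s). if a \<le> s \<and> s \<le> f t then 1 else 0)"
    by (auto simp: indicator_def fun_eq_iff)
  have W_meas: "(\<lambda>(t, s). W t s) \<in> borel_measurable (lborel \<Otimes>\<^sub>M lborel)"
    and W'_meas: "(\<lambda>(t, s). W' t s) \<in> borel_measurable (lborel \<Otimes>\<^sub>M lborel)"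
    unfolding W_def W'_def I_def q_def using region by (simp_all add: split_beta' fun_eq_iff)
  have "(\<integral>\<^sup>+t. ennreal (indicator I t * (f t powr p - a powr (p - 1) * f t)) \<partial>lborel)
      = (\<integral>\<^sup>+t. (\<integral>\<^sup>+s. W t s \<partial>lborel) \<partial>lborel)"
  proof (rule nn_integral_cong)
    show "ennreal (indicator I t * (f t powr p - a powr (p - 1) * f t)) = (\<integral>\<^sup>+s. W t s \<partial>lborel)"
      for t using fa a_pos p
      by (cases "t \<in> I") (simp_all add: W_def q_def nn_integral_layer_weight_const)
  qed
  also have "\<dots> = (\<integral>\<^sup>+s. (\<integral>\<^sup>+t. W t s \<partial>lborel) \<partial>lborel)"
    by (rule lborel_pair.Fubini'[symmetric]) (use W_meas in simp)
  also have "\<dots> \<le> (\<integral>\<^sup>+s. (\<integral>\<^sup>+t. W' t s \<partial>lborel) \<partial>lborel)"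
    unfolding W_def W'_def I_def a_def using p
    by (intro nn_integral_mono superlevel_weighted_le) (simp add: q_def)
  also have "\<dots> = (\<integral>\<^sup>+t. (\<integral>\<^sup>+s. W' t s \<partial>lborel) \<partial>lborel)"
    by (rule lborel_pair.Fubini') (use W'_meas in simp)
  also have "\<dots> = (\<integral>\<^sup>+t. ennreal (c * (p - 1) / p)
      * ennreal (indicator I t * (f t powr p - a powr p)) \<partial>lborel)"
  proof (rule nn_integral_cong)
    show "(\<integral>\<^sup>+s. W' t s \<partial>lborel)
        = ennreal (c * (p - 1) / p) * ennreal (indicator I t * (f t powr p - a powr p))" for t
      using fa a_pos c_pos p
      by (cases "t \<in> I")
        (simp_all add: W'_def q_def nn_integral_layer_weight_linear ennreal_mult'[symmetric])
  qed
  also have "\<dots> = ennreal (c * (p - 1) / p)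
      * (\<integral>\<^sup>+t. ennreal (indicator I t * (f t powr p - a powr p)) \<partial>lborel)"
    by (rule nn_integral_cmult) (simp add: I_def)
  finally show ?thesis unfolding I_def a_def .
qed

lemma integrable_indicator_bounded:
  fixes h :: "real \<Rightarrow> real"
  assumes [measurable]: "h \<in> borel_measurable borel"
    and bounded: "\<And>t. t \<in> {0<..\<delta>} \<Longrightarrow> \<bar>h t\<bar> \<le> B"
  shows "integrable lborel (\<lambda>t. indicator {0<..\<delta>} t * h t)"
  using integrableI_bounded_set_indicator[of "{0<..\<delta>}" lborel h B] bounded delta_pos by simp

lemma layer_cake_bound_integral:
  assumes p: "1 < p"
    and int_fp: "integrable lborel (\<lambda>t. indicator {0<..\<delta>} t * f t powr p)"
    and int_f: "integrable lborel (\<lambda>t. indicator {0<..\<delta>} t * f t)"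
  defines "X \<equiv> \<integral>t. indicator {0<..\<delta>} t * f t powr p \<partial>lborel"
    and "F \<equiv> \<integral>t. indicator {0<..\<delta>} t * f t \<partial>lborel"
  shows "X - f \<delta> powr (p - 1) * F \<le> c * (p - 1) / p * (X - f \<delta> powr p * \<delta>)"
proof -
  define I where "I = {0<..\<delta>}"
  define a where "a = f \<delta>"
  have a_pos: "0 < a" unfolding a_def by (rule f_delta_pos)
  have fa: "a \<le> f t" if "t \<in> I" for t using f_delta_le that unfolding a_def I_def by simp
  have int_I: "integrable lborel (\<lambda>t. indicator I t :: real)"
    unfolding I_def using delta_pos by simp
  have powr_ge: "a powr p \<le> f t powr p" "a powr (p - 1) * f t \<le> f t powr p" if "t \<in> I" for t
  proof -
    show "a powr p \<le> f t powr p" using fa[OF that] a_pos p by (intro powr_mono2) auto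
    have "a powr (p - 1) * f t \<le> f t powr (p - 1) * f t"
      using fa[OF that] a_pos p by (intro mult_right_mono powr_mono2) auto
    also have "\<dots> = f t powr p"
      using fa[OF that] a_pos powr_mult_base[of "f t" "p - 1"] by (simp add: mult.commute)
    finally show "a powr (p - 1) * f t \<le> f t powr p" .
  qed
  have left: "(\<integral>\<^sup>+t. ennreal (indicator I t * (f t powr p - a powr (p - 1) * f t)) \<partial>lborel)
      = ennreal (X - a powr (p - 1) * F)"
  proof -
    have "(\<lambda>t. indicator I t * (f t powr p - a powr (p - 1) * f t))
        = (\<lambda>t. indicator I t * f t powr p - a powr (p - 1) * (indicator I t * f t))"
      by (simp add: fun_eq_iff algebra_simps)
    with int_f int_fp powr_ge show ?thesis unfolding X_def F_def I_def
      by (subst nn_integral_eq_integral) (auto simp: indicator_def)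
  qed
  have right: "(\<integral>\<^sup>+t. ennreal (indicator I t * (f t powr p - a powr p)) \<partial>lborel)
      = ennreal (X - a powr p * \<delta>)"
  proof -
    have eq: "(\<lambda>t. indicator I t * (f t powr p - a powr p))
        = (\<lambda>t. indicator I t * f t powr p - a powr p * indicator I t)"
      by (simp add: fun_eq_iff algebra_simps)
    have "(\<integral>t. indicator I t * f t powr p - a powr p * indicator I t \<partial>lborel) = X - a powr p * \<delta>"
      unfolding X_def using int_I int_fp delta_pos by (simp add: I_def)
    with eq int_I int_fp powr_ge show ?thesis unfolding I_def
      by (subst nn_integral_eq_integral) (auto simp: indicator_def)
  qed
  have right_nonneg: "0 \<le> X - a powr p * \<delta>"
  proof -
    have "a powr p * \<delta> = (\<integral>t. a powr p * indicator I t \<partial>lborel)"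
      using delta_pos by (simp add: I_def)
    also have "\<dots> \<le> X"
      unfolding X_def using int_I int_fp powr_ge
      by (intro integral_mono) (auto simp: indicator_def I_def)
    finally show ?thesis by simp
  qed
  have k_nonneg: "0 \<le> c * (p - 1) / p" using c_pos p by simp
  have "ennreal (X - a powr (p - 1) * F) \<le> ennreal (c * (p - 1) / p) * ennreal (X - a powr p * \<delta>)"
    using layer_cake_bound[OF p] left right unfolding I_def a_def by simp
  then have "ennreal (X - a powr (p - 1) * F) \<le> ennreal (c * (p - 1) / p * (X - a powr p * \<delta>))"
    by (simp only: ennreal_mult[OF k_nonneg right_nonneg])
  then show ?thesis unfolding a_def[symmetric]
    by (rule ennreal_le_iff[THEN iffD1, OF mult_nonneg_nonneg[OF k_nonneg right_nonneg]])
qed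

lemma power_integral_le_bounded:
  assumes p: "1 < p" "c * (p - 1) < p" and bounded: "\<And>t. t \<in> {0<..\<delta>} \<Longrightarrow> f t \<le> M"
  shows "(\<integral>t. indicator {0<..\<delta>} t * f t powr p \<partial>lborel)
    \<le> \<delta> / (c powr (p - 1) * (c + p - p * c))
       * ((\<integral>t. indicator {0<..\<delta>} t * f t \<partial>lborel) / \<delta>) powr p"
proof -
  have f_pos: "0 < f t" if "t \<in> {0<..\<delta>}" for t using f_delta_le[OF that] f_delta_pos by simp
  have int_fp: "integrable lborel (\<lambda>t. indicator {0<..\<delta>} t * f t powr p)"
    using f_pos bounded p
    by (intro integrable_indicator_bounded[where B = "M powr p"]) (auto simp: less_imp_le intro!: powr_mono2)
  have int_f: "integrable lborel (\<lambda>t. indicator {0<..\<delta>} t * f t)"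
    using f_pos bounded by (intro integrable_indicator_bounded[where B = M]) (auto simp: less_imp_le)
  have "0 \<le> (\<integral>t. indicator {0<..\<delta>} t * f t \<partial>lborel)"
    using f_pos by (intro integral_nonneg_AE AE_I2) (auto simp: indicator_def less_imp_le)
  with layer_cake_bound_integral[OF p(1) int_fp int_f] show ?thesis
    by (rule power_bound_of_level_estimate[OF delta_pos c_pos f_delta_pos p, rotated])
qed

end

lemma decreasing_avg_bounded_truncation:
  assumes adm: "admissible c g" and c: "1 \<le> c" and \<delta>: "\<delta> \<in> {0<..1}" and M: "g \<delta> \<le> M"
  shows "decreasing_avg_bounded (\<lambda>x. min (indicator {0<..1} x * g x) M) \<delta> c"
proof -
  have g_pos: "\<And>t. t \<in> {0<..1} \<Longrightarrow> g t > 0"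
    and g_antimono: "\<And>s t. s \<in> {0<..1} \<Longrightarrow> t \<in> {0<..1} \<Longrightarrow> s \<le> t \<Longrightarrow> g t \<le> g s"
    and g_int: "\<And>t. t \<in> {0<..1} \<Longrightarrow> set_integrable lborel {0<..t} g"
    and g_avg: "\<And>t. t \<in> {0<..1} \<Longrightarrow> (1 / t) * (LBINT u:{0<..t}. g u) \<le> c * g t"
    using adm unfolding admissible_def by auto
  define f where "f x = min (indicator {0<..1} x * g x) M" for x
  have f_eq: "f x = min (g x) M" if "x \<in> {0<..1}" for x using that by (simp add: f_def)
  show ?thesis unfolding f_def[symmetric]
  proof
    show "f \<in> borel_measurable borel"
      using g_int[of 1] unfolding set_integrable_def f_def
      by (auto dest: borel_measurable_integrable)
    show "0 < \<delta>" "0 < c" using \<delta> c by auto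
    show "0 < f \<delta>" using f_eq[OF \<delta>] g_pos[OF \<delta>] M by simp
    show "f t \<le> f s" if "0 < s" "s \<le> t" "t \<le> \<delta>" for s t
      using that \<delta> f_eq[of s] f_eq[of t] g_antimono[of s t] by (auto simp: min_def)
    fix t assume t: "t \<in> {0<..\<delta>}"
    then have t1: "t \<in> {0<..1}" using \<delta> by auto
    have f_on: "indicator {0<..t} x * f x = indicator {0<..t} x * min (g x) M" for x
      using t1 f_eq[of x] by (auto simp: indicator_def)
    show "(\<integral>\<^sup>+x. ennreal (indicator {0<..t} x * f x) \<partial>lborel) \<le> ennreal (c * t * f t)"
    proof (cases "g t \<le> M")
      case True
      have "(\<integral>\<^sup>+x. ennreal (indicator {0<..t} x * f x) \<partial>lborel)
          \<le> (\<integral>\<^sup>+x. ennreal (indicator {0<..t} x * g x) \<partial>lborel)"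
        unfolding f_on by (intro nn_integral_mono ennreal_leI) (auto simp: indicator_def)
      also have "\<dots> = ennreal (LBINT u:{0<..t}. g u)"
        using g_int[OF t1] g_pos t1 unfolding set_integrable_def set_lebesgue_integral_def
        by (subst nn_integral_eq_integral) (auto simp: indicator_def less_imp_le)
      also have "\<dots> \<le> ennreal (c * t * f t)"
        using g_avg[OF t1] t1 f_eq[OF t1] True by (intro ennreal_leI) (simp add: field_simps)
      finally show ?thesis .
    next
      case False
      text \<open>Here f t = M bounds f on (0,t], and the hypothesis c \<ge> 1 is what is needed.\<close>
      have fM: "f t = M" using f_eq[OF t1] False by simp
      have M_nonneg: "0 \<le> M" using M g_pos[OF \<delta>] by simp
      have "(\<integral>\<^sup>+x. ennreal (indicator {0<..t} x * f x) \<partial>lborel)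
          \<le> (\<integral>\<^sup>+x. ennreal M * indicator {0<..t} x \<partial>lborel)"
        unfolding f_on by (intro nn_integral_mono) (auto simp: indicator_def intro: ennreal_leI)
      also have "\<dots> = ennreal (M * t)"
        using t M_nonneg by (simp add: nn_integral_cmult_indicator ennreal_mult)
      also have "\<dots> \<le> ennreal (c * t * f t)"
        unfolding fM using t c M_nonneg mult_right_mono[of 1 c "t * M"]
        by (intro ennreal_leI) (simp add: mult_ac)
      finally show ?thesis .
    qed
  qed
qed

lemma admissible_truncated_power_integral_le:
  assumes adm: "admissible c g" and c: "1 \<le> c" and p: "1 < p" "c * (p - 1) < p"
    and \<delta>: "\<delta> \<in> {0<..1}" and M: "g \<delta> \<le> M"
  shows "(\<integral>\<^sup>+x. ennreal (indicator {0<..\<delta>} x * min (indicator {0<..1} x * g x) M powr p) \<partial>lborel)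
    \<le> ennreal (\<delta> / (c powr (p - 1) * (c + p - p * c)) * ((LBINT u:{0<..\<delta>}. g u) / \<delta>) powr p)"
proof -
  define I where "I = {0<..\<delta>}"
  define h where "h x = min (indicator {0<..1} x * g x) M" for x
  interpret decreasing_avg_bounded h \<delta> c
    unfolding h_def by (rule decreasing_avg_bounded_truncation[OF adm c \<delta> M])
  have g_pos: "\<And>t. t \<in> {0<..1} \<Longrightarrow> g t > 0"
    and g_int: "set_integrable lborel I g"
    using adm \<delta> unfolding admissible_def I_def by auto
  have M_pos: "0 < M" using M g_pos[OF \<delta>] by simp
  have h_range: "0 \<le> h x" "h x \<le> M" for x
    using g_pos M_pos by (auto simp: h_def indicator_def less_imp_le)
  have h_le_g: "h x \<le> g x" if "x \<in> I" for x using that \<delta> by (auto simp: h_def I_def)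
  have int_h: "integrable lborel (\<lambda>t. indicator I t * h t)"
    unfolding I_def using h_range by (intro integrable_indicator_bounded[where B = M]) auto
  have int_h_pow: "integrable lborel (\<lambda>t. indicator I t * h t powr p)"
    unfolding I_def using h_range p
    by (intro integrable_indicator_bounded[where B = "M powr p"]) (auto intro!: powr_mono2)
  define F where "F = (\<integral>t. indicator I t * h t \<partial>lborel)"
  define K where "K = c powr (p - 1) * (c + p - p * c)"
  have "0 < c + p - p * c" using p by (simp add: algebra_simps)
  then have K_pos: "0 < K" unfolding K_def using c by simp
  have "F \<le> (LBINT u:I. g u)"
    unfolding F_def set_lebesgue_integral_def using int_h g_int h_le_g
    by (intro integral_mono) (auto simp: set_integrable_def indicator_def)
  moreover have "0 \<le> F"
    unfolding F_def using h_range by (intro integral_nonneg_AE AE_I2) simp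
  ultimately have "\<delta> / K * (F / \<delta>) powr p \<le> \<delta> / K * ((LBINT u:I. g u) / \<delta>) powr p"
    using delta_pos K_pos p by (intro mult_left_mono powr_mono2 divide_right_mono) auto
  with power_integral_le_bounded[OF p h_range(2)]
  have "(\<integral>t. indicator I t * h t powr p \<partial>lborel) \<le> \<delta> / K * ((LBINT u:I. g u) / \<delta>) powr p"
    unfolding I_def F_def K_def by linarith
  with int_h_pow show ?thesis
    unfolding I_def h_def K_def by (subst nn_integral_eq_integral) (auto simp: ennreal_leI)
qed

lemma power_avg_ineq_admissible:
  assumes adm: "admissible c g" and c: "1 \<le> c" and p: "1 < p" "c * (p - 1) < p"
    and \<delta>: "\<delta> \<in> {0<..1}"
  shows "power_avg_ineq (1 / (c powr (p - 1) * (c + p - p * c))) p g \<delta>"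
proof -
  define I where "I = {0<..\<delta>}"
  define B where "B = \<delta> / (c powr (p - 1) * (c + p - p * c)) * ((LBINT u:I. g u) / \<delta>) powr p"
  define h where "h x = indicator {0<..1} x * g x" for x
  have g_pos: "\<And>t. t \<in> {0<..1} \<Longrightarrow> g t > 0"
    and g_int: "set_integrable lborel {0<..1} g"
    using adm unfolding admissible_def by auto
  have h_meas: "h \<in> borel_measurable lborel"
    using g_int unfolding set_integrable_def h_def by (auto dest: borel_measurable_integrable)
  have "0 < c + p - p * c" using p by (simp add: algebra_simps)
  then have B_nonneg: "0 \<le> B" unfolding B_def using \<delta> c by simp
  have "(\<integral>\<^sup>+x. ennreal (indicator I x * h x powr p) \<partial>lborel) \<le> ennreal B"
  proof (rule nn_integral_powr_le_of_truncations[where T = "g \<delta>"])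
    show "h \<in> borel_measurable lborel" "I \<in> sets lborel" using h_meas by (simp_all add: I_def)
    show "0 \<le> h x" for x using g_pos by (auto simp: h_def indicator_def less_imp_le)
    show "0 \<le> p" "0 \<le> g \<delta>" using p g_pos[OF \<delta>] by simp_all
    show "(\<integral>\<^sup>+x. ennreal (indicator I x * min (h x) M powr p) \<partial>lborel) \<le> ennreal B"
      if "g \<delta> \<le> M" for M
      unfolding B_def I_def h_def by (rule admissible_truncated_power_integral_le[OF adm c p \<delta> that])
  qed
  moreover have g_eq_h: "indicator I x * g x powr p = indicator I x * h x powr p" for x
    using \<delta> by (auto simp: indicator_def I_def h_def)
  ultimately have g_pow_nn: "(\<integral>\<^sup>+x. ennreal (indicator I x * g x powr p) \<partial>lborel) \<le> ennreal B"
    by (simp only:)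
  have g_pow_meas: "(\<lambda>x. indicator I x * g x powr p) \<in> borel_measurable lborel"
    using h_meas by (simp only: g_eq_h) (simp add: I_def)
  have "0 \<le> indicator I x * g x powr p" for x by simp
  note g_pow = integral_le_of_nn_integral_le[OF g_pow_meas this B_nonneg g_pow_nn]
  have "(LBINT u:{0<..\<delta>}. g u powr p) \<le> B"
    using g_pow(2) unfolding set_lebesgue_integral_def I_def by simp
  with g_pow(1) \<delta> show ?thesis
    unfolding power_avg_ineq_def set_integrable_def B_def I_def by (simp add: field_simps)
qed

lemma power_avg_ineq_one:
  assumes adm: "admissible c g" and \<delta>: "\<delta> \<in> {0<..1}"
  shows "power_avg_ineq 1 1 g \<delta>"
proof -
  have g_pos: "g t > 0" if "t \<in> {0<..\<delta>}" for t
    using adm that \<delta> unfolding admissible_def by auto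
  have g_int: "set_integrable lborel {0<..\<delta>} g" using adm \<delta> unfolding admissible_def by auto
  have powr_one: "g u powr 1 = g u" if "u \<in> {0<..\<delta>}" for u
    using g_pos[OF that] by simp
  have "set_integrable lborel {0<..\<delta>} (\<lambda>u. g u powr 1) \<longleftrightarrow> set_integrable lborel {0<..\<delta>} g"
    by (rule set_integrable_cong[OF refl refl powr_one])
  moreover have "(LBINT u:{0<..\<delta>}. g u powr 1) = (LBINT u:{0<..\<delta>}. g u)"
    using powr_one by (intro set_lebesgue_integral_cong) auto
  moreover have "0 \<le> (LBINT u:{0<..\<delta>}. g u)"
    unfolding set_lebesgue_integral_def using g_pos
    by (intro integral_nonneg_AE AE_I2) (auto simp: indicator_def less_imp_le)
  ultimately show ?thesis unfolding power_avg_ineq_def using g_int \<delta> by auto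
qed

lemma admissible_powr:
  assumes c: "1 \<le> c"
  shows "admissible c (\<lambda>t. t powr (1 / c - 1))"
  unfolding admissible_def
proof (intro conjI ballI impI)
  fix t :: real assume t: "t \<in> {0<..1}"
  have e: "1 / c - 1 > -1" using c by simp
  show "0 < t powr (1 / c - 1)" using t by simp
  show "set_integrable lborel {0<..t} (\<lambda>u. u powr (1 / c - 1))"
    using set_integral_powr_Ioc_0(1)[OF _ e] t by simp
  have "1 / t * (LBINT u:{0<..t}. u powr (1 / c - 1)) = c * (t powr (1 / c) / t)"
    using set_integral_powr_Ioc_0(2)[OF _ e, of t] t by simp
  also have "t powr (1 / c) / t = t powr (1 / c - 1)"
    using t by (simp add: powr_diff)
  finally show "1 / t * (LBINT u:{0<..t}. u powr (1 / c - 1)) \<le> c * t powr (1 / c - 1)"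
    by simp
next
  fix s t :: real assume "s \<in> {0<..1}" "t \<in> {0<..1}" "s \<le> t"
  then show "t powr (1 / c - 1) \<le> s powr (1 / c - 1)"
    using c by (intro powr_mono2') (auto simp: field_simps)
qed

lemma not_power_avg_ineq_powr:
  assumes c: "1 \<le> c" and p: "c * (p - 1) < p"
    and K: "K < 1 / (c powr (p - 1) * (c + p - p * c))"
  shows "\<not> power_avg_ineq K p (\<lambda>t. t powr (1 / c - 1)) 1"
proof
  assume ineq: "power_avg_ineq K p (\<lambda>t. t powr (1 / c - 1)) 1"
  have D: "0 < c + p - p * c" using p by (simp add: algebra_simps)
  have e: "(1 / c - 1) * p > -1" "1 / c - 1 > -1" using p c by (simp_all add: field_simps)
  have "(LBINT u:{0<..1}. (u powr (1 / c - 1)) powr p) = (LBINT u:{0<..1}. u powr ((1 / c - 1) * p))"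
    by (intro set_lebesgue_integral_cong) (auto simp: powr_powr)
  also have "\<dots> = c / (c + p - p * c)"
    using set_integral_powr_Ioc_0(2)[OF _ e(1), of 1] c by (simp add: field_simps)
  finally have lhs: "(LBINT u:{0<..1}. (u powr (1 / c - 1)) powr p) = c / (c + p - p * c)" .
  have rhs: "(LBINT u:{0<..1}. u powr (1 / c - 1)) = c"
    using set_integral_powr_Ioc_0(2)[OF _ e(2), of 1] c by simp
  have "c / (c + p - p * c) \<le> K * c powr p"
    using ineq unfolding power_avg_ineq_def lhs rhs by simp
  also have "\<dots> < 1 / (c powr (p - 1) * (c + p - p * c)) * c powr p"
    using K c by (intro mult_strict_right_mono) auto
  also have "\<dots> = c / (c + p - p * c)"
  proof -
    have cancel: "\<And>X E :: real. 0 < X \<Longrightarrow> 0 < E \<Longrightarrow> 1 / (X * E) * (c * X) = c / E"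
      by (simp add: field_simps)
    have "c powr p = c * c powr (p - 1)" using c powr_mult_base[of c "p - 1"] by simp
    then show ?thesis using cancel[OF _ D, of "c powr (p - 1)"] c by simp
  qed
  finally show False by simp
qed

theorem lemma2:
  fixes c p :: real
  assumes "c \<ge> 1" and "p \<ge> 1" and "c = 1 \<or> p < c / (c - 1)"
  shows "(\<forall>g \<delta>. admissible c g \<longrightarrow> \<delta> \<in> {0<..1} \<longrightarrow>
            power_avg_ineq (1 / (c powr (p - 1) * (c + p - p * c))) p g \<delta>)
       \<and> (\<forall>K < 1 / (c powr (p - 1) * (c + p - p * c)).
            \<exists>g \<delta>. admissible c g \<and> \<delta> \<in> {0<..1} \<and> \<not> power_avg_ineq K p g \<delta>)"
proof -
  have p_range: "c * (p - 1) < p"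
  proof (cases "c = 1")
    case False
    then have "c > 1" "p < c / (c - 1)" using assms by auto
    then show ?thesis by (simp add: field_simps)
  qed simp
  have upper: "power_avg_ineq (1 / (c powr (p - 1) * (c + p - p * c))) p g \<delta>"
    if "admissible c g" "\<delta> \<in> {0<..1}" for g \<delta>
  proof (cases "p = 1")
    case True
    then show ?thesis using power_avg_ineq_one[OF that] assms(1) by simp
  next
    case False
    then show ?thesis using power_avg_ineq_admissible[OF that(1) assms(1) _ p_range that(2)] assms(2)
      by simp
  qed
  have sharp: "\<exists>g \<delta>. admissible c g \<and> \<delta> \<in> {0<..1} \<and> \<not> power_avg_ineq K p g \<delta>"
    if "K < 1 / (c powr (p - 1) * (c + p - p * c))" for K
    using admissible_powr[OF assms(1)] not_power_avg_ineq_powr[OF assms(1) p_range that]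
    by (intro exI[of _ "\<lambda>t. t powr (1 / c - 1)"] exI[of _ 1]) simp
  show ?thesis using upper sharp by blast
qed

end
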